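(* For any real matrix $A\in\mathbf{R}^{2n\times 2m}$ there exists a unique bimatrix $\{A_1,A_2\}$ with $A_1,A_2\in\mathbf{C}^{n\times m}$ such that $\{A_1,A_2\}_\circ=A$. Moreover, $A_1$ and $A_2$ are given by $$\begin{bmatrix}A_1\\ A_2\end{bmatrix}=H_nAH_m^{\mathrm H}\begin{bmatrix}I_m\\ 0_{m\times m}\end{bmatrix}.$$
   Context: $P^{\#}$ and $P^{\mathrm H}$ denote entrywise conjugate and conjugate transpose; $\mathrm{j}$ is the imaginary unit. For $A_1,A_2\in\mathbf{C}^{n\times m}$ the bimatrix $\{A_1,A_2\}$ is the real-linear map $\mathbf{C}^m\to\mathbf{C}^n$, $x\mapsto A_1x+A_2^{\#}x^{\#}$; two bimatrices are equal iff they agree as maps (equivalently, iff the defining pairs coincide). Its real representation is $\{A_1,A_2\}_\circ=\begin{bmatrix}\mathrm{Re}(A_1+A_2) & -\mathrm{Im}(A_1+A_2)\\ \mathrm{Im}(A_1-A_2) & \mathrm{Re}(A_1-A_2)\end{bmatrix}\in\mathbf{R}^{2n\times 2m}$. For each $k$, $H_k=\frac{1}{\sqrt2}\begin{bmatrix}I_k & \mathrm{j}I_k\\ I_k & -\mathrm{j}I_k\end{bmatrix}$. *)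

theory Defs
  imports Complex_Main "Jordan_Normal_Form.Matrix"
begin

text \<open>A bimatrix {A1,A2} is represented by the pair (A1, A2) of complex n x m matrices;
  two bimatrices are equal iff the defining pairs coincide.\<close>

definition bimat_apply :: "complex mat \<times> complex mat \<Rightarrow> complex vec \<Rightarrow> complex vec" where
  "bimat_apply P x = fst P *\<^sub>v x + map_mat cnj (snd P) *\<^sub>v map_vec cnj x"

definition bimat_real_rep :: "complex mat \<times> complex mat \<Rightarrow> real mat" where
  "bimat_real_rep P = (let A1 = fst P; A2 = snd P in
     four_block_mat (map_mat Re (A1 + A2)) (map_mat (\<lambda>z. - Im z) (A1 + A2))
                    (map_mat Im (A1 - A2)) (map_mat Re (A1 - A2)))"

definition mat_cH :: "complex mat \<Rightarrow> complex mat" where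
  "mat_cH A = transpose_mat (map_mat cnj A)"

definition H_mat :: "nat \<Rightarrow> complex mat" where
  "H_mat k = (complex_of_real (1 / sqrt 2)) \<cdot>\<^sub>m
     four_block_mat (1\<^sub>m k) (\<i> \<cdot>\<^sub>m 1\<^sub>m k) (1\<^sub>m k) ((- \<i>) \<cdot>\<^sub>m 1\<^sub>m k)"

end

theory Submission
  imports Defs
begin

text \<open>Writing \<open>A = [B11 B12; B21 B22]\<close> in \<open>n \<times> m\<close> blocks, the equation \<open>{A1,A2}\<^sub>\<circ> = A\<close> says
  \<open>A1 + A2 = B11 - j B12\<close> and \<open>A1 - A2 = B22 + j B21\<close>, which determines \<open>A1\<close> and \<open>A2\<close>.
  Since \<open>H\<^sub>m\<^sup>H [I; 0] = [I; -j I]/\<surd>2\<close>, the product \<open>H\<^sub>n A H\<^sub>m\<^sup>H [I; 0]\<close> equals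
  \<open>[I, j I; I, -j I] [B11 - j B12; B21 - j B22] / 2\<close>, whose two blocks are exactly
  \<open>((A1 + A2) + (A1 - A2))/2\<close> and \<open>((A1 + A2) - (A1 - A2))/2\<close>.\<close>

definition bimat_of_real_rep :: "nat \<Rightarrow> nat \<Rightarrow> real mat \<Rightarrow> complex mat \<times> complex mat" where
  "bimat_of_real_rep n m A =
    (mat n m (\<lambda>(i,j). Complex ((A $$ (i,j) + A $$ (i+n,j+m)) / 2) ((A $$ (i+n,j) - A $$ (i,j+m)) / 2)),
     mat n m (\<lambda>(i,j). Complex ((A $$ (i,j) - A $$ (i+n,j+m)) / 2) (- (A $$ (i,j+m) + A $$ (i+n,j)) / 2)))"

lemma bimat_of_real_rep_carrier:
  "fst (bimat_of_real_rep n m A) \<in> carrier_mat n m"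
  "snd (bimat_of_real_rep n m A) \<in> carrier_mat n m"
  unfolding bimat_of_real_rep_def by auto

lemma index_bimat_real_rep:
  assumes "A1 \<in> carrier_mat n m" and "A2 \<in> carrier_mat n m" and "i < n" and "j < m"
  shows "bimat_real_rep (A1, A2) $$ (i, j) = Re (A1 $$ (i,j) + A2 $$ (i,j))"
    and "bimat_real_rep (A1, A2) $$ (i, j + m) = - Im (A1 $$ (i,j) + A2 $$ (i,j))"
    and "bimat_real_rep (A1, A2) $$ (i + n, j) = Im (A1 $$ (i,j) - A2 $$ (i,j))"
    and "bimat_real_rep (A1, A2) $$ (i + n, j + m) = Re (A1 $$ (i,j) - A2 $$ (i,j))"
  using assms unfolding bimat_real_rep_def Let_def by auto

lemma less_double_cases:
  fixes i n :: nat
  assumes "i < 2 * n"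
  obtains "i < n" | i' where "i = i' + n" and "i' < n"
  using assms by (metis add.commute le_add_diff_inverse mult_2 nat_add_left_cancel_less not_less)

lemma bimat_real_rep_bimat_of_real_rep:
  assumes A: "A \<in> carrier_mat (2 * n) (2 * m)"
  shows "bimat_real_rep (bimat_of_real_rep n m A) = A"
proof (rule eq_matI)
  fix i j assume "i < dim_row A" and "j < dim_col A"
  then have i: "i < 2 * n" and j: "j < 2 * m" using A by auto
  show "bimat_real_rep (bimat_of_real_rep n m A) $$ (i, j) = A $$ (i, j)"
    using i j by (cases rule: less_double_cases[OF i]; cases rule: less_double_cases[OF j])
      (simp_all add: bimat_real_rep_def bimat_of_real_rep_def Let_def field_simps)
qed (use A in \<open>auto simp: bimat_real_rep_def bimat_of_real_rep_def Let_def\<close>)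

lemma bimat_of_real_rep_bimat_real_rep:
  assumes A1: "A1 \<in> carrier_mat n m" and A2: "A2 \<in> carrier_mat n m"
  shows "bimat_of_real_rep n m (bimat_real_rep (A1, A2)) = (A1, A2)"
proof -
  have "fst (bimat_of_real_rep n m (bimat_real_rep (A1, A2))) = A1"
    and "snd (bimat_of_real_rep n m (bimat_real_rep (A1, A2))) = A2"
    using A1 A2 by (auto intro!: eq_matI
        simp: bimat_of_real_rep_def index_bimat_real_rep[OF A1 A2] complex_eq_iff)
  then show ?thesis by (simp add: prod_eq_iff)
qed

lemma mat_cH_H_mat_mult_first_block:
  "mat_cH (H_mat m) * (1\<^sub>m m @\<^sub>r 0\<^sub>m m m) =
   mat (2 * m) m (\<lambda>(p,j). complex_of_real (1 / sqrt 2) *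
      ((if p = j then 1 else 0) + (if p = j + m then - \<i> else 0)))"
  (is "?L = ?R")
proof (rule eq_matI)
  fix p j assume "p < dim_row ?R" and "j < dim_col ?R"
  then have p: "p < 2 * m" and j: "j < m" by auto
  have "?L $$ (p,j) = (\<Sum>l<2 * m. mat_cH (H_mat m) $$ (p,l) * (if l = j then 1 else 0))"
    using p j unfolding mat_cH_def H_mat_def append_rows_def
    by (auto simp: scalar_prod_def intro!: sum.cong)
  also have "\<dots> = mat_cH (H_mat m) $$ (p,j)"
    using j by (simp add: if_distrib cong: if_cong)
  finally show "?L $$ (p,j) = ?R $$ (p,j)"
    using p j unfolding mat_cH_def H_mat_def by auto
qed (auto simp: mat_cH_def H_mat_def append_rows_def)

lemma mult_mat_cH_H_mat_first_block:
  assumes A: "A \<in> carrier_mat k (2 * m)"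
  shows "map_mat complex_of_real A * (mat_cH (H_mat m) * (1\<^sub>m m @\<^sub>r 0\<^sub>m m m)) =
    mat k m (\<lambda>(i,j). complex_of_real (1 / sqrt 2) *
      (complex_of_real (A $$ (i,j)) - \<i> * complex_of_real (A $$ (i,j+m))))"
  (is "?L = ?R")
proof (rule eq_matI)
  fix i j assume "i < dim_row ?R" and "j < dim_col ?R"
  then have i: "i < k" and j: "j < m" by auto
  let ?a = "\<lambda>p. complex_of_real (A $$ (i,p))" and ?c = "complex_of_real (1 / sqrt 2)"
  have "?L $$ (i,j)
    = (\<Sum>p<2 * m. ?a p * (?c * ((if p = j then 1 else 0) + (if p = j + m then - \<i> else 0))))"
    using A i j unfolding mat_cH_H_mat_mult_first_block
    by (auto simp: scalar_prod_def intro!: sum.cong)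
  also have "\<dots> = (\<Sum>p<2 * m. ?c * (if p = j then ?a p else 0))
      + (\<Sum>p<2 * m. ?c * (if p = j + m then - \<i> * ?a p else 0))"
    by (simp only: sum.distrib[symmetric], rule sum.cong) (auto simp: algebra_simps)
  also have "\<dots> = ?c * (?a j - \<i> * ?a (j + m))"
    using j by (simp only: sum_distrib_left[symmetric] sum.delta finite_lessThan lessThan_iff)
      (simp add: algebra_simps)
  finally show "?L $$ (i,j) = ?R $$ (i,j)"
    using i j by simp
qed (use A in \<open>auto simp: mat_cH_H_mat_mult_first_block\<close>)

lemma index_H_mat_mult:
  assumes Y: "Y \<in> carrier_mat (2 * n) m" and i: "i < 2 * n" and j: "j < m"
  shows "(H_mat n * Y) $$ (i,j) = complex_of_real (1 / sqrt 2) *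
    (if i < n then Y $$ (i,j) + \<i> * Y $$ (i+n,j) else Y $$ (i-n,j) - \<i> * Y $$ (i,j))"
proof -
  let ?c = "complex_of_real (1 / sqrt 2)"
  have "(H_mat n * Y) $$ (i,j) = (\<Sum>k<2 * n. H_mat n $$ (i,k) * Y $$ (k,j))"
    using Y i j by (simp add: H_mat_def scalar_prod_def lessThan_atLeast0)
  also have "\<dots> = (\<Sum>k<2 * n. ?c *
    (if i < n then (if k = i then Y $$ (k,j) else 0) + (if k = i + n then \<i> * Y $$ (k,j) else 0)
     else (if k = i - n then Y $$ (k,j) else 0) + (if k = i then - \<i> * Y $$ (k,j) else 0)))"
    using i by (intro sum.cong) (auto simp: H_mat_def algebra_simps)
  also have "\<dots> = ?c *
    (if i < n then Y $$ (i,j) + \<i> * Y $$ (i+n,j) else Y $$ (i-n,j) - \<i> * Y $$ (i,j))"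
    using i by (cases "i < n") (simp_all only: sum_distrib_left[symmetric] sum.distrib sum.delta
          finite_lessThan lessThan_iff if_True if_False, auto)
  finally show ?thesis .
qed

lemma H_mat_real_mat_cH_H_mat_first_block:
  assumes A: "A \<in> carrier_mat (2 * n) (2 * m)"
  shows "H_mat n * map_mat complex_of_real A * mat_cH (H_mat m) * (1\<^sub>m m @\<^sub>r 0\<^sub>m m m)
    = fst (bimat_of_real_rep n m A) @\<^sub>r snd (bimat_of_real_rep n m A)"
  (is "?L = ?R")
proof -
  let ?Y = "mat (2 * n) m (\<lambda>(i,j). complex_of_real (1 / sqrt 2) *
      (complex_of_real (A $$ (i,j)) - \<i> * complex_of_real (A $$ (i,j+m))))"
  have H: "H_mat n \<in> carrier_mat (2 * n) (2 * n)" unfolding H_mat_def by auto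
  have AC: "map_mat complex_of_real A \<in> carrier_mat (2 * n) (2 * m)" using A by auto
  have HC: "mat_cH (H_mat m) \<in> carrier_mat (2 * m) (2 * m)" unfolding H_mat_def mat_cH_def by auto
  have E: "(1\<^sub>m m @\<^sub>r 0\<^sub>m m m) \<in> carrier_mat (2 * m) m"
    using carrier_append_rows[of "1\<^sub>m m" m m "0\<^sub>m m m" m] by (simp add: mult_2)
  have R: "?R \<in> carrier_mat (2 * n) m"
    using carrier_append_rows[OF bimat_of_real_rep_carrier] by (simp add: mult_2)
  have "?L = H_mat n * (map_mat complex_of_real A * (mat_cH (H_mat m) * (1\<^sub>m m @\<^sub>r 0\<^sub>m m m)))"
    by (simp add: assoc_mult_mat[OF mult_carrier_mat[OF H AC] HC E]
        assoc_mult_mat[OF H AC mult_carrier_mat[OF HC E]])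
  also have "\<dots> = H_mat n * ?Y"
    using A by (simp add: mult_mat_cH_H_mat_first_block)
  also have "\<dots> = ?R"
  proof (rule eq_matI)
    have half: "complex_of_real (1 / sqrt 2) * complex_of_real (1 / sqrt 2) = 1 / 2"
      by (simp flip: of_real_mult)
    fix i j assume "i < dim_row ?R" and "j < dim_col ?R"
    then have i: "i < 2 * n" and j: "j < m" using R by auto
    have "(H_mat n * ?Y) $$ (i, j) = complex_of_real (1 / sqrt 2) *
      (if i < n then ?Y $$ (i,j) + \<i> * ?Y $$ (i+n,j) else ?Y $$ (i-n,j) - \<i> * ?Y $$ (i,j))"
      by (rule index_H_mat_mult) (use i j in auto)
    then show "(H_mat n * ?Y) $$ (i, j) = ?R $$ (i, j)"
      using i j by (cases rule: less_double_cases[OF i])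
        (simp_all add: append_rows_def bimat_of_real_rep_def complex_eq_iff algebra_simps
          half[symmetric])
  qed (use H R in auto)
  finally show ?thesis .
qed

theorem lemma4:
  fixes n m :: nat and A :: "real mat"
  assumes "A \<in> carrier_mat (2 * n) (2 * m)"
  shows "(\<exists>!P. fst P \<in> carrier_mat n m \<and> snd P \<in> carrier_mat n m \<and> bimat_real_rep P = A)
    \<and> (\<forall>A1 A2. A1 \<in> carrier_mat n m \<and> A2 \<in> carrier_mat n m \<and> bimat_real_rep (A1, A2) = A \<longrightarrow>
         A1 @\<^sub>r A2 = H_mat n * map_mat complex_of_real A * mat_cH (H_mat m)
                      * (1\<^sub>m m @\<^sub>r 0\<^sub>m m m))"
proof -
  have unique: "(A1, A2) = bimat_of_real_rep n m A"
    if "A1 \<in> carrier_mat n m" and "A2 \<in> carrier_mat n m" and "bimat_real_rep (A1, A2) = A"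
    for A1 A2
    using bimat_of_real_rep_bimat_real_rep that by metis
  show ?thesis
  proof (intro conjI allI impI)
    show "\<exists>!P. fst P \<in> carrier_mat n m \<and> snd P \<in> carrier_mat n m \<and> bimat_real_rep P = A"
    proof (rule ex1I)
      show "fst (bimat_of_real_rep n m A) \<in> carrier_mat n m
        \<and> snd (bimat_of_real_rep n m A) \<in> carrier_mat n m
        \<and> bimat_real_rep (bimat_of_real_rep n m A) = A"
        using assms bimat_of_real_rep_carrier bimat_real_rep_bimat_of_real_rep by blast
    qed (use unique in auto)
    show "A1 @\<^sub>r A2 = H_mat n * map_mat complex_of_real A * mat_cH (H_mat m) * (1\<^sub>m m @\<^sub>r 0\<^sub>m m m)"
      if "A1 \<in> carrier_mat n m \<and> A2 \<in> carrier_mat n m \<and> bimat_real_rep (A1, A2) = A" for A1 A2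
      using that unique[of A1 A2] H_mat_real_mat_cH_H_mat_first_block[OF assms]
      by (metis fst_conv snd_conv)
  qed
qed

end
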